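(* Let $\mathcal{A}$ be a unital algebra generated by two unital subalgebras $\mathcal{A}_1,\mathcal{A}_2$. Let $T\subset \mathbb{R}$ be such that $0$ is an accumulation point of $T$, let $(\tau_t)_{t\in T}$ be unital linear functionals on $\mathcal{A}$, and let $\mathcal{I}_1$ (resp. $\mathcal{I}_2$) be an ideal of $\mathcal{A}_1$ (resp. $\mathcal{A}_2$) such that: $\mathcal{A}_1$ and $\mathcal{A}_2$ are free with respect to $\tau_t$ up to order $o(t)$; there exists $\tau: \mathcal{A}_1\cup \mathcal{A}_2 \to \mathbb{C}$ such that $\tau_t(a)=\tau(a)+o(t)$ as $t\to0$ for all $a\in \mathcal{A}_1\cup \mathcal{A}_2$; there exists $\tau': \mathcal{I}_1\cup \mathcal{I}_2 \to \mathbb{C}$ such that $\tau_t(a)=t\,\tau'(a)+o(t)$ as $t\to0$ for all $a \in \mathcal{I}_1\cup \mathcal{I}_2$. Let $\mathcal{I}$ be the ideal of $\mathcal{A}$ generated by $\mathcal{I}_1\cup \mathcal{I}_2$. Then $\tau$ extends to a linear functional on $\mathcal{A}$ and $\tau'$ to a linear functional on $\mathcal{I}$ such that, as $t\to 0$, $\tau_t(a)= \tau(a)+o(1)$ for all $a\in \mathcal{A}$ and $\tau_t(a)= t\, \tau'(a)+o(t)$ for all $a\in \mathcal{I}$. Moreover, $(\mathcal{A}_1,\mathcal{I}_1)$ and $(\mathcal{A}_2,\mathcal{I}_2)$ are free of type $B$ in $(\mathcal{A},\tau,\mathcal{I},\tau')$.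
   Context: Freeness up to order $o(t)$: whenever $a_1\in\mathcal{A}_{i_1},\dots,a_n\in\mathcal{A}_{i_n}$ with consecutive indices different, $\tau_t((a_1-\tau_t(a_1))\cdots(a_n-\tau_t(a_n)))=o(t)$. Freeness of type $B$ in $(\mathcal{A},\tau,\mathcal{I},\tau')$ for $(\mathcal{A}_1,\mathcal{I}_1)$, $(\mathcal{A}_2,\mathcal{I}_2)$: $\mathcal{A}_1,\mathcal{A}_2$ are free w.r.t. $\tau$, and whenever $a_n\in\mathcal{A}_{i_n},\dots,a_1\in\mathcal{A}_{i_1}$, $v\in\mathcal{I}_h$, $b_1\in\mathcal{A}_{j_1},\dots,b_m\in\mathcal{A}_{j_m}$ with any two consecutive indices in $i_n,\dots,i_1,h,j_1,\dots,j_m$ different and all $a_r,b_s$ centered for $\tau$, $\tau'(a_n\cdots a_1vb_1\cdots b_m)=\tau(a_nb_m)\cdots\tau(a_1b_1)\tau'(v)$ if $n=m$ and $i_r=j_r$ for all $r$, and $=0$ otherwise. *)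

theory Defs
  imports "HOL-Analysis.Analysis" "HOL-Library.Landau_Symbols"
begin

definition complex_algebra :: "(complex \<Rightarrow> 'a::ring_1 \<Rightarrow> 'a) \<Rightarrow> bool" where
  "complex_algebra sc \<longleftrightarrow> module sc \<and>
     (\<forall>c x y. sc c (x * y) = sc c x * y \<and> sc c (x * y) = x * sc c y)"

definition unital_subalgebra :: "(complex \<Rightarrow> 'a::ring_1 \<Rightarrow> 'a) \<Rightarrow> 'a set \<Rightarrow> bool" where
  "unital_subalgebra sc B \<longleftrightarrow> 1 \<in> B \<and>
     (\<forall>x\<in>B. \<forall>y\<in>B. x + y \<in> B \<and> x * y \<in> B) \<and> (\<forall>c. \<forall>x\<in>B. sc c x \<in> B)"

definition subalgebra_hull :: "(complex \<Rightarrow> 'a::ring_1 \<Rightarrow> 'a) \<Rightarrow> 'a set \<Rightarrow> 'a set" where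
  "subalgebra_hull sc S = \<Inter>{B. unital_subalgebra sc B \<and> S \<subseteq> B}"

definition ideal_of :: "(complex \<Rightarrow> 'a::ring_1 \<Rightarrow> 'a) \<Rightarrow> 'a set \<Rightarrow> 'a set \<Rightarrow> bool" where
  "ideal_of sc B J \<longleftrightarrow> J \<subseteq> B \<and> 0 \<in> J \<and>
     (\<forall>x\<in>J. \<forall>y\<in>J. x + y \<in> J) \<and> (\<forall>c. \<forall>x\<in>J. sc c x \<in> J) \<and>
     (\<forall>a\<in>B. \<forall>x\<in>J. a * x \<in> J \<and> x * a \<in> J)"

definition ideal_hull :: "(complex \<Rightarrow> 'a::ring_1 \<Rightarrow> 'a) \<Rightarrow> 'a set \<Rightarrow> 'a set" where
  "ideal_hull sc S = \<Inter>{J. ideal_of sc UNIV J \<and> S \<subseteq> J}"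

definition linear_functional_on ::
    "(complex \<Rightarrow> 'a::ring_1 \<Rightarrow> 'a) \<Rightarrow> 'a set \<Rightarrow> ('a \<Rightarrow> complex) \<Rightarrow> bool" where
  "linear_functional_on sc D f \<longleftrightarrow>
     (\<forall>x\<in>D. \<forall>y\<in>D. f (x + y) = f x + f y) \<and> (\<forall>c. \<forall>x\<in>D. f (sc c x) = c * f x)"

definition pick :: "nat \<Rightarrow> 'b \<Rightarrow> 'b \<Rightarrow> 'b" where
  "pick i X1 X2 = (if i = 1 then X1 else X2)"

definition alternating :: "nat list \<Rightarrow> bool" where
  "alternating is \<longleftrightarrow> (\<forall>k. Suc k < length is \<longrightarrow> is ! k \<noteq> is ! Suc k)"

definition admissible :: "'a set \<Rightarrow> 'a set \<Rightarrow> (nat \<times> 'a) list \<Rightarrow> bool" where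
  "admissible A1 A2 xs \<longleftrightarrow> (\<forall>(i, a) \<in> set xs. i \<in> {1, 2} \<and> a \<in> pick i A1 A2) \<and>
     alternating (map fst xs)"

definition centered_prod ::
    "(complex \<Rightarrow> 'a::ring_1 \<Rightarrow> 'a) \<Rightarrow> ('a \<Rightarrow> complex) \<Rightarrow> (nat \<times> 'a) list \<Rightarrow> 'a" where
  "centered_prod sc phi xs = prod_list (map (\<lambda>(i, a). a - sc (phi a) 1) xs)"

definition free_wrt ::
    "(complex \<Rightarrow> 'a::ring_1 \<Rightarrow> 'a) \<Rightarrow> ('a \<Rightarrow> complex) \<Rightarrow> 'a set \<Rightarrow> 'a set \<Rightarrow> bool" where
  "free_wrt sc phi A1 A2 \<longleftrightarrow>
     (\<forall>xs. xs \<noteq> [] \<and> admissible A1 A2 xs \<longrightarrow> phi (centered_prod sc phi xs) = 0)"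

definition free_up_to_o_t ::
    "(complex \<Rightarrow> 'a::ring_1 \<Rightarrow> 'a) \<Rightarrow> real set \<Rightarrow> (real \<Rightarrow> 'a \<Rightarrow> complex) \<Rightarrow> 'a set \<Rightarrow> 'a set \<Rightarrow> bool" where
  "free_up_to_o_t sc T tau A1 A2 \<longleftrightarrow>
     (\<forall>xs. xs \<noteq> [] \<and> admissible A1 A2 xs \<longrightarrow>
        (\<lambda>t. tau t (centered_prod sc (tau t) xs)) \<in> o[at 0 within T](\<lambda>t. complex_of_real t))"

text \<open>Freeness of type B of (A1,I1), (A2,I2) in (A, phi, I, phi').  The list as = [(i_1,a_1),...,(i_n,a_n)]
  encodes a_n ... a_1 (closest to v first), bs = [(j_1,b_1),...,(j_m,b_m)] encodes b_1 ... b_m.\<close>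
definition free_type_B ::
    "(complex \<Rightarrow> 'a::ring_1 \<Rightarrow> 'a) \<Rightarrow> ('a \<Rightarrow> complex) \<Rightarrow> ('a \<Rightarrow> complex) \<Rightarrow>
     'a set \<Rightarrow> 'a set \<Rightarrow> 'a set \<Rightarrow> 'a set \<Rightarrow> bool" where
  "free_type_B sc phi phi' A1 I1 A2 I2 \<longleftrightarrow>
     free_wrt sc phi A1 A2 \<and>
     (\<forall>as bs h v.
        h \<in> {1, 2} \<and> v \<in> pick h I1 I2 \<and>
        (\<forall>(i, a) \<in> set as. i \<in> {1, 2} \<and> a \<in> pick i A1 A2 \<and> phi a = 0) \<and>
        (\<forall>(j, b) \<in> set bs. j \<in> {1, 2} \<and> b \<in> pick j A1 A2 \<and> phi b = 0) \<and>
        alternating (rev (map fst as) @ [h] @ map fst bs) \<longrightarrow>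
        phi' (prod_list (rev (map snd as)) * v * prod_list (map snd bs)) =
          (if map fst as = map fst bs
           then (\<Prod>(a, b) \<leftarrow> zip (map snd as) (map snd bs). phi (a * b)) * phi' v
           else 0))"

end

theory Submission
  imports Defs
begin

text \<open>
  Write f \<sim> c if f(t) \<rightarrow> c and f \<sim> t d if f(t)/t \<rightarrow> d, as t \<rightarrow> 0 in T. Shift each letter a
  of a word by a convergent scalar function s, i.e. replace it by a - s(t). By induction on the
  length, \<tau>_t of a shifted word converges, and is \<sim> t d as soon as one letter lies in
  I_1 or I_2 with a shift \<sim> t d. The engine is that changing one shift from s to s'
  changes \<tau>_t(word) by (s'(t) - s(t)) \<tau>_t(shorter word): two adjacent letters from the same
  subalgebra are unshifted this way and merged, and in an alternating word all shifts are moved to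
  \<tau>_t(a), which yields a centred product, o(t) by freeness.
  Words span \<A> and words with a letter in I_1 \<union> I_2 span the ideal \<I>, so \<tau> = lim \<tau>_t and
  \<tau>' = lim \<tau>_t/t exist and are linear. Moving shifts that differ by o(t) changes \<tau>_t by o(t);
  hence \<tau> is free, and \<tau>_t(P v B) = \<tau>_t(v) \<tau>_t(P B) + o(t) when the letters of P and B are
  \<tau>-centred, which together with the freeness of \<tau> gives the type B formula.
\<close>

section \<open>Functions of t near 0\<close>

definition conv0 :: "real set \<Rightarrow> (real \<Rightarrow> 'b::real_normed_field) set" where
  "conv0 T = {f. \<exists>c. (f \<longlongrightarrow> c) (at 0 within T)}"

definition lin0 :: "real set \<Rightarrow> (real \<Rightarrow> 'b::real_normed_field) set" where
  "lin0 T = {f. (\<lambda>t. f t / of_real t) \<in> conv0 T}"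

definition small0 :: "real set \<Rightarrow> (real \<Rightarrow> 'b::real_normed_field) set" where
  "small0 T = {f. ((\<lambda>t. f t / of_real t) \<longlongrightarrow> 0) (at 0 within T)}"

lemma eventually_at_0_within_mem: "eventually (\<lambda>t. t \<in> T \<and> t \<noteq> 0) (at (0::real) within T)"
  by (simp add: eventually_at_filter)

lemma conv0_cong: "eventually (\<lambda>t. f t = g t) (at 0 within T) \<Longrightarrow> f \<in> conv0 T \<Longrightarrow> g \<in> conv0 T"
  unfolding conv0_def by (auto intro: tendsto_cong[THEN iffD1])

lemma lin0_cong: "eventually (\<lambda>t. f t = g t) (at 0 within T) \<Longrightarrow> f \<in> lin0 T \<Longrightarrow> g \<in> lin0 T"
  unfolding lin0_def mem_Collect_eq by (erule conv0_cong[rotated]) (auto elim: eventually_mono)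

lemma conv0_const [simp]: "(\<lambda>_. c) \<in> conv0 T"
  unfolding conv0_def by auto

lemma conv0_add: "f \<in> conv0 T \<Longrightarrow> g \<in> conv0 T \<Longrightarrow> (\<lambda>t. f t + g t) \<in> conv0 T"
  unfolding conv0_def by (auto intro: tendsto_add)

lemma conv0_diff: "f \<in> conv0 T \<Longrightarrow> g \<in> conv0 T \<Longrightarrow> (\<lambda>t. f t - g t) \<in> conv0 T"
  unfolding conv0_def by (auto intro: tendsto_diff)

lemma conv0_mult: "f \<in> conv0 T \<Longrightarrow> g \<in> conv0 T \<Longrightarrow> (\<lambda>t. f t * g t) \<in> conv0 T"
  unfolding conv0_def by (auto intro: tendsto_mult)

lemma conv0_minus: "f \<in> conv0 T \<Longrightarrow> (\<lambda>t. - f t) \<in> conv0 T"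
  unfolding conv0_def by (auto intro: tendsto_minus)

lemma lin0_zero [simp]: "(\<lambda>_. 0) \<in> lin0 T"
  by (simp add: lin0_def)

lemma lin0_add: "f \<in> lin0 T \<Longrightarrow> g \<in> lin0 T \<Longrightarrow> (\<lambda>t. f t + g t) \<in> lin0 T"
  unfolding lin0_def mem_Collect_eq by (drule (1) conv0_add) (simp add: add_divide_distrib)

lemma lin0_diff: "f \<in> lin0 T \<Longrightarrow> g \<in> lin0 T \<Longrightarrow> (\<lambda>t. f t - g t) \<in> lin0 T"
  unfolding lin0_def mem_Collect_eq by (drule (1) conv0_diff) (simp add: diff_divide_distrib)

lemma lin0_minus: "f \<in> lin0 T \<Longrightarrow> (\<lambda>t. - f t) \<in> lin0 T"
  unfolding lin0_def mem_Collect_eq by (drule conv0_minus) simp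

lemma lin0_mult_conv0: "f \<in> lin0 T \<Longrightarrow> g \<in> conv0 T \<Longrightarrow> (\<lambda>t. f t * g t) \<in> lin0 T"
  unfolding lin0_def mem_Collect_eq by (drule (1) conv0_mult) (simp add: ac_simps)

lemma conv0_mult_lin0: "f \<in> conv0 T \<Longrightarrow> g \<in> lin0 T \<Longrightarrow> (\<lambda>t. f t * g t) \<in> lin0 T"
  using lin0_mult_conv0[of g T f] by (simp add: mult.commute)

lemma lin0_imp_conv0: "f \<in> lin0 T \<Longrightarrow> f \<in> conv0 T"
proof -
  assume "f \<in> lin0 T"
  then have "(\<lambda>t. f t / of_real t * of_real t) \<in> conv0 T"
    unfolding lin0_def mem_Collect_eq by (rule conv0_mult) (auto simp: conv0_def intro!: tendsto_eq_intros)
  then show "f \<in> conv0 T"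
    by (rule conv0_cong[rotated]) (use eventually_at_0_within_mem[of T] in \<open>eventually_elim, simp\<close>)
qed

lemma small0_imp_lin0: "f \<in> small0 T \<Longrightarrow> f \<in> lin0 T"
  unfolding small0_def lin0_def conv0_def by blast

lemma small0_zero [simp]: "(\<lambda>_. 0) \<in> small0 T"
  by (simp add: small0_def)

lemma small0_add: "f \<in> small0 T \<Longrightarrow> g \<in> small0 T \<Longrightarrow> (\<lambda>t. f t + g t) \<in> small0 T"
  unfolding small0_def mem_Collect_eq by (drule (1) tendsto_add) (simp add: add_divide_distrib)

lemma small0_mult_conv0: "f \<in> small0 T \<Longrightarrow> g \<in> conv0 T \<Longrightarrow> (\<lambda>t. f t * g t) \<in> small0 T"
  unfolding small0_def conv0_def by (auto dest: tendsto_mult simp: ac_simps)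

lemma small0_cong: "eventually (\<lambda>t. f t = g t) (at 0 within T) \<Longrightarrow> f \<in> small0 T \<Longrightarrow> g \<in> small0 T"
  unfolding small0_def mem_Collect_eq by (erule tendsto_cong[THEN iffD1, rotated]) (auto elim: eventually_mono)

lemma small0_iff_smallo:
  fixes f :: "real \<Rightarrow> 'b::real_normed_field"
  shows "f \<in> small0 T \<longleftrightarrow> f \<in> o[at 0 within T](\<lambda>t. of_real t)"
proof
  have nz: "eventually (\<lambda>t. (of_real t :: 'b) \<noteq> 0) (at 0 within T)"
    using eventually_at_0_within_mem[of T] by eventually_elim simp
  show "f \<in> small0 T \<Longrightarrow> f \<in> o[at 0 within T](\<lambda>t. of_real t)"
    unfolding small0_def by (auto intro: smalloI_tendsto[OF _ nz])
  show "f \<in> o[at 0 within T](\<lambda>t. of_real t) \<Longrightarrow> f \<in> small0 T"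
    unfolding small0_def by (auto dest: smalloD_tendsto)
qed

lemma small0_imp_tendsto_zero: "f \<in> small0 T \<Longrightarrow> (f \<longlongrightarrow> 0) (at 0 within T)"
proof -
  assume "f \<in> small0 T"
  then have "((\<lambda>t. f t / of_real t * of_real t) \<longlongrightarrow> 0 * of_real 0) (at 0 within T)"
    unfolding small0_def mem_Collect_eq by (intro tendsto_mult tendsto_of_real tendsto_ident_at)
  then show ?thesis
    unfolding mult_zero_left
    by (rule tendsto_cong[THEN iffD1, rotated]) (use eventually_at_0_within_mem[of T] in \<open>eventually_elim, simp\<close>)
qed

lemma small0_diff_imp_tendsto: "(\<lambda>t. f t - c) \<in> small0 T \<Longrightarrow> (f \<longlongrightarrow> c) (at 0 within T)"
  by (subst Lim_null) (rule small0_imp_tendsto_zero)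

lemma slope_tendsto_iff_small0:
  "((\<lambda>t. f t / of_real t) \<longlongrightarrow> d) (at 0 within T) \<longleftrightarrow> (\<lambda>t. f t - of_real t * d) \<in> small0 T"
proof -
  have "eventually (\<lambda>t. f t / of_real t - d = (f t - of_real t * d) / of_real t) (at 0 within T)"
    using eventually_at_0_within_mem[of T] by eventually_elim (simp add: diff_divide_distrib)
  then have "((\<lambda>t. f t / of_real t - d) \<longlongrightarrow> 0) (at 0 within T) \<longleftrightarrow> (\<lambda>t. f t - of_real t * d) \<in> small0 T"
    unfolding small0_def mem_Collect_eq by (rule tendsto_cong)
  then show ?thesis by (simp add: Lim_null[symmetric])
qed

lemma tendsto_within_cong:
  "(f \<longlongrightarrow> c) (at x within T) \<Longrightarrow> (\<And>t. t \<in> T \<Longrightarrow> f t = g t) \<Longrightarrow> (g \<longlongrightarrow> c) (at x within T)"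
  using Lim_cong_within[of x x c c T T f g] by simp

section \<open>Words in two subalgebras\<close>

lemma alternating_eq_distinct_adj: "alternating = distinct_adj"
  by (intro ext) (simp only: alternating_def distinct_adj_conv_nth)

lemma not_distinct_adj_map_split:
  assumes "\<not> distinct_adj (map f xs)"
  shows "\<exists>pre x y post. xs = pre @ x # y # post \<and> f x = f y"
  using assms
proof (induction xs rule: induct_list012)
  case (3 x y zs)
  show ?case
  proof (cases "f x = f y")
    case True
    then show ?thesis by (intro exI[of _ "[]"]) auto
  next
    case False
    with "3.prems" have "\<not> distinct_adj (map f (y # zs))" by simp
    with "3.IH"(2) obtain pre u v post where "y # zs = pre @ u # v # post" "f u = f v"
      by blast
    then show ?thesis by (intro exI[of _ "x # pre"]) auto
  qed
qed simp_all

lemma complex_algebra_module: "complex_algebra sc \<Longrightarrow> module sc"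
  by (simp add: complex_algebra_def)

lemma complex_algebra_scale_mult:
  assumes "complex_algebra sc"
  shows "sc c x * y = sc c (x * y)" and "x * sc c y = sc c (x * y)"
  using assms unfolding complex_algebra_def by metis+

lemma complex_algebra_scale_one_mult:
  assumes "complex_algebra sc"
  shows "x * sc c 1 * y = sc c (x * y)"
  by (simp add: complex_algebra_scale_mult[OF assms])

lemma span_mult_span:
  assumes alg: "complex_algebra sc"
    and mult: "\<And>x y. x \<in> S \<Longrightarrow> y \<in> S' \<Longrightarrow> x * y \<in> module.span sc P"
    and x: "x \<in> module.span sc S" and y: "y \<in> module.span sc S'"
  shows "x * y \<in> module.span sc P"
proof -
  interpret module sc by (rule complex_algebra_module[OF alg])
  have left: "x * y \<in> span P" if "x \<in> S" for x
    using y
  proof (induction y rule: span_induct_alt)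
    case (step c y y')
    then show ?case
      by (simp add: distrib_left complex_algebra_scale_mult[OF alg] span_add span_scale mult that)
  qed (simp add: span_zero)
  show ?thesis
    using x
  proof (induction x rule: span_induct_alt)
    case (step c x x')
    then show ?case
      by (simp add: distrib_right complex_algebra_scale_mult[OF alg] span_add span_scale left)
  qed (simp add: span_zero)
qed

lemma centered_prod_centered:
  assumes "complex_algebra sc" and "\<forall>(i, a) \<in> set xs. phi a = 0"
  shows "centered_prod sc phi xs = prod_list (map snd xs)"
proof -
  interpret module sc by (rule complex_algebra_module[OF assms(1)])
  show ?thesis using assms(2) by (induction xs) (auto simp: centered_prod_def)
qed

text \<open>A shifted letter (i, a, s) stands for the factor a - s(t) 1; the index i records the
  subalgebra A_i that a is taken from.\<close>

type_synonym 'a shifted_letter = "nat \<times> 'a \<times> (real \<Rightarrow> complex)"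

definition shifted_word :: "(complex \<Rightarrow> 'a::ring_1 \<Rightarrow> 'a) \<Rightarrow> real \<Rightarrow> 'a shifted_letter list \<Rightarrow> 'a" where
  "shifted_word sc t L = prod_list (map (\<lambda>(i, a, s). a - sc (s t) 1) L)"

lemma shifted_word_simps [simp]:
  "shifted_word sc t [] = 1"
  "shifted_word sc t ((i, a, s) # L) = (a - sc (s t) 1) * shifted_word sc t L"
  "shifted_word sc t (L @ M) = shifted_word sc t L * shifted_word sc t M"
  by (simp_all add: shifted_word_def)

lemma shifted_word_change_shift:
  assumes alg: "complex_algebra sc"
  shows "shifted_word sc t (pre @ (i, a, s) # post) =
    shifted_word sc t (pre @ (i, a, s') # post) + sc (s' t - s t) (shifted_word sc t (pre @ post))"
proof -
  interpret module sc by (rule complex_algebra_module[OF alg])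
  define P R where "P = shifted_word sc t pre" and "R = shifted_word sc t post"
  have letter: "a - sc (s t) 1 = (a - sc (s' t) 1) + sc (s' t - s t) 1"
    by (simp add: scale_left_diff_distrib)
  have "P * (a - sc (s t) 1) * R = P * (a - sc (s' t) 1) * R + P * sc (s' t - s t) 1 * R"
    by (simp only: letter distrib_left distrib_right)
  then show ?thesis
    by (simp add: P_def R_def mult.assoc complex_algebra_scale_one_mult[OF alg, symmetric])
qed

lemma shifted_word_merge_unshifted:
  assumes "complex_algebra sc"
  shows "shifted_word sc t (pre @ (i, a, \<lambda>_. 0) # (j, b, \<lambda>_. 0) # post) =
    shifted_word sc t (pre @ (i, a * b, \<lambda>_. 0) # post)"
proof -
  interpret module sc by (rule complex_algebra_module[OF assms])
  show ?thesis by (simp only: shifted_word_simps append_Cons scale_zero_left diff_zero mult.assoc)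
qed

definition with_shifts :: "('a \<Rightarrow> real \<Rightarrow> complex) \<Rightarrow> (nat \<times> 'a) list \<Rightarrow> 'a shifted_letter list" where
  "with_shifts f xs = map (\<lambda>(i, a). (i, a, f a)) xs"

lemma with_shifts_simps [simp]:
  "with_shifts f [] = []"
  "with_shifts f ((i, a) # xs) = (i, a, f a) # with_shifts f xs"
  "with_shifts f (xs @ ys) = with_shifts f xs @ with_shifts f ys"
  by (simp_all add: with_shifts_def)

lemma shifted_word_with_shifts: "shifted_word sc t (with_shifts f xs) = centered_prod sc (\<lambda>a. f a t) xs"
  by (simp add: shifted_word_def with_shifts_def centered_prod_def comp_def split_def)

lemma shifted_word_unshifted:
  assumes "complex_algebra sc"
  shows "shifted_word sc t (with_shifts (\<lambda>_ _. 0) xs) = prod_list (map snd xs)"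
  by (simp add: shifted_word_with_shifts centered_prod_centered[OF assms])

lemma list_all2_with_shifts:
  "(\<And>i a. (i, a) \<in> set xs \<Longrightarrow> P (i, a, f a) (i, a, g a)) \<Longrightarrow>
    list_all2 P (with_shifts f xs) (with_shifts g xs)"
  unfolding with_shifts_def list_all2_map1 list_all2_map2 list_all2_same by auto

locale two_subalgebras =
  fixes sc :: "complex \<Rightarrow> 'a::ring_1 \<Rightarrow> 'a" and A1 A2 :: "'a set"
  assumes alg: "complex_algebra sc"
    and sub1: "unital_subalgebra sc A1"
    and sub2: "unital_subalgebra sc A2"
begin

sublocale module sc
  by (rule complex_algebra_module[OF alg])

definition letters :: "(nat \<times> 'a) list \<Rightarrow> bool" where
  "letters xs \<longleftrightarrow> (\<forall>(i, a) \<in> set xs. i \<in> {1, 2} \<and> a \<in> pick i A1 A2)"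

lemma letters_simps [simp]:
  "letters []"
  "letters ((i, a) # xs) \<longleftrightarrow> i \<in> {1, 2} \<and> a \<in> pick i A1 A2 \<and> letters xs"
  "letters (xs @ ys) \<longleftrightarrow> letters xs \<and> letters ys"
  "letters (rev xs) \<longleftrightarrow> letters xs"
  by (auto simp: letters_def)

lemma admissible_iff_letters: "admissible A1 A2 xs \<longleftrightarrow> letters xs \<and> alternating (map fst xs)"
  by (simp add: admissible_def letters_def)

lemma pick_subalgebra: "i \<in> {1, 2} \<Longrightarrow> unital_subalgebra sc (pick i A1 A2)"
  using sub1 sub2 by (auto simp: pick_def)

lemma pick_subset_Un: "i \<in> {1, 2} \<Longrightarrow> pick i A1 A2 \<subseteq> A1 \<union> A2"
  by (auto simp: pick_def)

lemma letters_in_Un: "letters xs \<Longrightarrow> (i, a) \<in> set xs \<Longrightarrow> a \<in> A1 \<union> A2"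
  by (fastforce simp: letters_def pick_def split: if_splits)

lemma pick_mult: "i \<in> {1, 2} \<Longrightarrow> a \<in> pick i A1 A2 \<Longrightarrow> b \<in> pick i A1 A2 \<Longrightarrow> a * b \<in> pick i A1 A2"
  using pick_subalgebra unfolding unital_subalgebra_def by blast

lemma pick_diff_scale_one: "i \<in> {1, 2} \<Longrightarrow> a \<in> pick i A1 A2 \<Longrightarrow> a - sc c 1 \<in> pick i A1 A2"
  using pick_subalgebra[of i] unfolding unital_subalgebra_def
  by (metis diff_conv_add_uminus scale_minus_left)

lemma free_wrt_alternating_centered:
  assumes "free_wrt sc phi A1 A2" and "xs \<noteq> []" and "letters xs" and "alternating (map fst xs)"
    and "\<forall>(i, a) \<in> set xs. phi a = 0"
  shows "phi (prod_list (map snd xs)) = 0"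
  using assms centered_prod_centered[OF alg assms(5)] by (auto simp: free_wrt_def admissible_iff_letters)

lemma free_wrt_factor_middle:
  assumes phi_lin: "linear_functional_on sc UNIV phi" and phi_one: "phi 1 = 1"
    and phi_free: "free_wrt sc phi A1 A2"
    and c: "i \<in> {1, 2}" "c \<in> pick i A1 A2" and "letters as" and "letters bs"
    and "\<forall>(i, a) \<in> set as. phi a = 0" and "\<forall>(j, b) \<in> set bs. phi b = 0"
    and "alternating (rev (map fst as) @ [i] @ map fst bs)"
  shows "phi (prod_list (rev (map snd as)) * c * prod_list (map snd bs)) =
    phi c * phi (prod_list (rev (map snd as)) * prod_list (map snd bs))"
proof -
  define P B where "P = prod_list (rev (map snd as))" and "B = prod_list (map snd bs)"
  have phi_add: "phi (u + v) = phi u + phi v" and phi_scale: "phi (sc d u) = d * phi u" for u v d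
    using phi_lin by (simp_all add: linear_functional_on_def)
  have "phi (c - sc (phi c) 1) = phi c + - phi c * phi 1"
    by (metis phi_add phi_scale scale_minus_left diff_conv_add_uminus)
  then have "phi (c - sc (phi c) 1) = 0"
    by (simp add: phi_one)
  then have "phi (prod_list (map snd (rev as @ (i, c - sc (phi c) 1) # bs))) = 0"
    using assms(6-) c by (intro free_wrt_alternating_centered[OF phi_free]) (auto simp: rev_map pick_diff_scale_one)
  then have centered: "phi (P * (c - sc (phi c) 1) * B) = 0"
    by (simp add: P_def B_def rev_map mult.assoc)
  have "P * c * B = P * (c - sc (phi c) 1) * B + sc (phi c) (P * B)"
    by (simp add: algebra_simps complex_algebra_scale_mult[OF alg])
  then show ?thesis
    unfolding P_def[symmetric] B_def[symmetric] by (simp add: phi_add phi_scale centered)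
qed

lemma free_wrt_mirror_moment:
  assumes phi_lin: "linear_functional_on sc UNIV phi" and phi_one: "phi 1 = 1"
    and phi_free: "free_wrt sc phi A1 A2"
    and "h \<in> {1, 2}" and "letters as" and "letters bs"
    and "\<forall>(i, a) \<in> set as. phi a = 0" and "\<forall>(j, b) \<in> set bs. phi b = 0"
    and "alternating (rev (map fst as) @ [h] @ map fst bs)"
  shows "phi (prod_list (rev (map snd as)) * prod_list (map snd bs)) =
    (if map fst as = map fst bs then (\<Prod>(a, b) \<leftarrow> zip (map snd as) (map snd bs). phi (a * b)) else 0)"
  using assms(4-)
proof (induction as arbitrary: h bs)
  case Nil
  show ?case
  proof (cases "bs = []")
    case False
    have "phi (prod_list (map snd bs)) = 0"
      by (rule free_wrt_alternating_centered[OF phi_free False])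
        (use Nil.prems False in \<open>simp_all add: alternating_eq_distinct_adj distinct_adj_Cons\<close>)
    with False show ?thesis by simp
  qed (simp add: phi_one)
next
  case (Cons x as')
  obtain i a where x: "x = (i, a)" by (cases x)
  show ?case
  proof (cases "bs = []")
    case True
    have "distinct_adj (rev (map fst (x # as')) @ [h])"
      using Cons.prems(6) True by (simp add: alternating_eq_distinct_adj)
    then have "distinct_adj (rev (map fst (x # as')))"
      by (rule distinct_adj_appendD1)
    then have "phi (prod_list (map snd (rev (x # as')))) = 0"
      by (intro free_wrt_alternating_centered[OF phi_free])
        (use Cons.prems in \<open>auto simp: alternating_eq_distinct_adj rev_map\<close>)
    with True show ?thesis by (simp add: rev_map)
  next
    case False
    then obtain j b bs' where bs: "bs = (j, b) # bs'"
      by (metis list.exhaust prod.exhaust)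
    have alt: "distinct_adj (rev (map fst as') @ [i])" "i \<noteq> h" "h \<noteq> j" "distinct_adj (j # map fst bs')"
      using Cons.prems(6) by (simp_all add: alternating_eq_distinct_adj distinct_adj_append_iff x bs)
    have ij: "i = j"
      using alt(2,3) Cons.prems(1-3) by (auto simp: x bs)
    have alt': "alternating (rev (map fst as') @ [i] @ map fst bs')"
      using alt ij by (auto simp: alternating_eq_distinct_adj distinct_adj_append_iff distinct_adj_Cons)
    have ab: "i \<in> {1, 2}" "a * b \<in> pick i A1 A2"
      using Cons.prems(2,3) ij pick_mult by (simp_all add: x bs)
    have "phi (prod_list (rev (map snd as')) * (a * b) * prod_list (map snd bs')) =
        phi (a * b) * phi (prod_list (rev (map snd as')) * prod_list (map snd bs'))"
      using Cons.prems alt' by (intro free_wrt_factor_middle[OF phi_lin phi_one phi_free ab]) (auto simp: x bs)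
    moreover have "phi (prod_list (rev (map snd as')) * prod_list (map snd bs')) =
        (if map fst as' = map fst bs' then (\<Prod>(a, b) \<leftarrow> zip (map snd as') (map snd bs'). phi (a * b)) else 0)"
      using Cons.prems alt' ab by (intro Cons.IH[of i]) (auto simp: x bs)
    ultimately show ?thesis
      by (simp add: x bs ij mult.assoc)
  qed
qed

definition words :: "'a set" where
  "words = {prod_list (map snd xs) | xs. letters xs}"

lemma single_letter_word: "i \<in> {1, 2} \<Longrightarrow> a \<in> pick i A1 A2 \<Longrightarrow> a \<in> words"
  by (auto simp: words_def intro!: exI[of _ "[(i, a)]"])

lemma words_mult: "x \<in> words \<Longrightarrow> y \<in> words \<Longrightarrow> x * y \<in> words"
proof -
  assume "x \<in> words" "y \<in> words"
  then obtain xs ys where "letters xs" "letters ys"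
    and "x = prod_list (map snd xs)" "y = prod_list (map snd ys)"
    by (auto simp: words_def)
  then show ?thesis
    unfolding words_def by (intro CollectI exI[of _ "xs @ ys"]) simp
qed

lemma span_words:
  assumes gen: "subalgebra_hull sc (A1 \<union> A2) = UNIV"
  shows "span words = UNIV"
proof -
  have mult: "x * y \<in> span words" if "x \<in> words" "y \<in> words" for x y
    using words_mult[OF that] by (rule span_base)
  have "1 \<in> words"
    by (auto simp: words_def intro!: exI[of _ "[]"])
  then have "unital_subalgebra sc (span words)"
    unfolding unital_subalgebra_def
    by (auto intro: span_base span_add span_scale span_mult_span[OF alg mult])
  moreover have "A1 \<union> A2 \<subseteq> span words"
    using single_letter_word[of 1] single_letter_word[of 2] by (auto simp: pick_def intro: span_base)
  ultimately show ?thesis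
    using gen unfolding subalgebra_hull_def by blast
qed

end

locale two_ideals = two_subalgebras +
  fixes I1 I2 :: "'a set"
  assumes id1: "ideal_of sc A1 I1" and id2: "ideal_of sc A2 I2"
begin

lemma pick_ideal: "i \<in> {1, 2} \<Longrightarrow> ideal_of sc (pick i A1 A2) (pick i I1 I2)"
  using id1 id2 by (auto simp: pick_def)

lemma pick_ideal_subset: "i \<in> {1, 2} \<Longrightarrow> pick i I1 I2 \<subseteq> pick i A1 A2"
  using pick_ideal unfolding ideal_of_def by blast

lemma pick_ideal_mult:
  "i \<in> {1, 2} \<Longrightarrow> a \<in> pick i A1 A2 \<Longrightarrow> b \<in> pick i A1 A2 \<Longrightarrow>
    a \<in> pick i I1 I2 \<or> b \<in> pick i I1 I2 \<Longrightarrow> a * b \<in> pick i I1 I2"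
  using pick_ideal unfolding ideal_of_def by blast

definition ideal_words :: "'a set" where
  "ideal_words = {prod_list (map snd xs) | xs. letters xs \<and> (\<exists>(i, a) \<in> set xs. a \<in> pick i I1 I2)}"

lemma words_mult_ideal_words:
  assumes "x \<in> words" and "y \<in> ideal_words"
  shows "x * y \<in> ideal_words" and "y * x \<in> ideal_words"
proof -
  obtain xs ys where "letters xs" "letters ys" "\<exists>(i, a) \<in> set ys. a \<in> pick i I1 I2"
    and "x = prod_list (map snd xs)" "y = prod_list (map snd ys)"
    using assms by (auto simp: words_def ideal_words_def)
  then show "x * y \<in> ideal_words" "y * x \<in> ideal_words"
    unfolding ideal_words_def
    by (intro CollectI exI[of _ "xs @ ys"] exI[of _ "ys @ xs"]; auto)+
qed

lemma ideal_hull_subset_span_ideal_words: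
  assumes gen: "subalgebra_hull sc (A1 \<union> A2) = UNIV"
  shows "ideal_hull sc (I1 \<union> I2) \<subseteq> span ideal_words"
proof -
  have left: "x * y \<in> span ideal_words" if "x \<in> words" "y \<in> ideal_words" for x y
    using words_mult_ideal_words(1)[OF that] by (rule span_base)
  have right: "y * x \<in> span ideal_words" if "y \<in> ideal_words" "x \<in> words" for x y
    using words_mult_ideal_words(2)[OF that(2,1)] by (rule span_base)
  have "ideal_of sc UNIV (span ideal_words)"
    unfolding ideal_of_def using span_words[OF gen]
    by (auto intro: span_zero span_add span_scale span_mult_span[OF alg left] span_mult_span[OF alg right])
  moreover have "I1 \<union> I2 \<subseteq> span ideal_words"
  proof
    fix a assume "a \<in> I1 \<union> I2"
    then have "a \<in> pick 1 I1 I2 \<or> a \<in> pick 2 I1 I2"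
      by (auto simp: pick_def)
    then obtain i where i: "i \<in> {1, 2}" "a \<in> pick i I1 I2"
      by blast
    then have "a = prod_list (map snd [(i, a)])" "letters [(i, a)]"
      using pick_ideal_subset by auto
    with i show "a \<in> span ideal_words"
      unfolding ideal_words_def by (intro span_base) fastforce
  qed
  ultimately show ?thesis
    unfolding ideal_hull_def by blast
qed

end

section \<open>Expansion of \<tau>_t on shifted words\<close>

locale infinitesimally_free = two_ideals +
  fixes T :: "real set" and tau :: "real \<Rightarrow> 'a \<Rightarrow> complex" and tau0 tau' :: "'a \<Rightarrow> complex"
  assumes gen: "subalgebra_hull sc (A1 \<union> A2) = UNIV"
    and acc: "0 islimpt T"
    and lin: "\<forall>t\<in>T. linear_functional_on sc UNIV (tau t) \<and> tau t 1 = 1"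
    and free: "free_up_to_o_t sc T tau A1 A2"
    and lim0: "\<forall>a \<in> A1 \<union> A2. (\<lambda>t. tau t a - tau0 a) \<in> o[at 0 within T](\<lambda>t. complex_of_real t)"
    and lim1: "\<forall>a \<in> I1 \<union> I2.
      (\<lambda>t. tau t a - complex_of_real t * tau' a) \<in> o[at 0 within T](\<lambda>t. complex_of_real t)"
begin

lemma tau_add: "t \<in> T \<Longrightarrow> tau t (x + y) = tau t x + tau t y"
  and tau_scale: "t \<in> T \<Longrightarrow> tau t (sc c x) = c * tau t x"
  and tau_one: "t \<in> T \<Longrightarrow> tau t 1 = 1"
  using lin by (auto simp: linear_functional_on_def)

lemma tau_zero: "t \<in> T \<Longrightarrow> tau t 0 = 0"
  using tau_scale[of t 0 0] by simp

lemma eventually_in_T: "eventually (\<lambda>t. t \<in> T) (at 0 within T)"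
  using eventually_at_0_within_mem[of T] by eventually_elim simp

lemma tau_letter_small0: "a \<in> A1 \<union> A2 \<Longrightarrow> (\<lambda>t. tau t a - tau0 a) \<in> small0 T"
  using lim0 by (simp add: small0_iff_smallo)

lemma tau_letter_conv0: "a \<in> A1 \<union> A2 \<Longrightarrow> (\<lambda>t. tau t a) \<in> conv0 T"
  using small0_diff_imp_tendsto[OF tau_letter_small0] by (auto simp: conv0_def)

lemma tau_ideal_letter_slope: "a \<in> I1 \<union> I2 \<Longrightarrow> ((\<lambda>t. tau t a / of_real t) \<longlongrightarrow> tau' a) (at 0 within T)"
  using lim1 by (simp add: slope_tendsto_iff_small0 small0_iff_smallo)

lemma tau_ideal_letter_lin0: "a \<in> I1 \<union> I2 \<Longrightarrow> (\<lambda>t. tau t a) \<in> lin0 T"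
  using tau_ideal_letter_slope by (auto simp: lin0_def conv0_def)

lemma free_centered_prod_small0:
  "xs \<noteq> [] \<Longrightarrow> admissible A1 A2 xs \<Longrightarrow> (\<lambda>t. tau t (centered_prod sc (tau t) xs)) \<in> small0 T"
  using free by (simp add: free_up_to_o_t_def small0_iff_smallo)

abbreviation tau_word :: "'a shifted_letter list \<Rightarrow> real \<Rightarrow> complex" where
  "tau_word L \<equiv> \<lambda>t. tau t (shifted_word sc t L)"

definition valid_word :: "'a shifted_letter list \<Rightarrow> bool" where
  "valid_word L \<longleftrightarrow> (\<forall>(i, a, s) \<in> set L. i \<in> {1, 2} \<and> a \<in> pick i A1 A2 \<and> s \<in> conv0 T)"

definition ideal_word :: "'a shifted_letter list \<Rightarrow> bool" where
  "ideal_word L \<longleftrightarrow> (\<exists>(i, a, s) \<in> set L. a \<in> pick i I1 I2 \<and> s \<in> lin0 T)"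

definition has_expansion :: "'a shifted_letter list \<Rightarrow> bool" where
  "has_expansion L \<longleftrightarrow> tau_word L \<in> conv0 T \<and> (ideal_word L \<longrightarrow> tau_word L \<in> lin0 T)"

lemma valid_word_simps [simp]:
  "valid_word []"
  "valid_word ((i, a, s) # L) \<longleftrightarrow> i \<in> {1, 2} \<and> a \<in> pick i A1 A2 \<and> s \<in> conv0 T \<and> valid_word L"
  "valid_word (L @ M) \<longleftrightarrow> valid_word L \<and> valid_word M"
  by (simp_all add: valid_word_def ball_Un)

lemma ideal_word_simps [simp]:
  "\<not> ideal_word []"
  "ideal_word ((i, a, s) # L) \<longleftrightarrow> a \<in> pick i I1 I2 \<and> s \<in> lin0 T \<or> ideal_word L"
  "ideal_word (L @ M) \<longleftrightarrow> ideal_word L \<or> ideal_word M"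
  by (simp_all add: ideal_word_def bex_Un)

lemma eventually_tau_word_change_shift:
  "eventually (\<lambda>t. tau_word (pre @ (i, a, s) # post) t =
     tau_word (pre @ (i, a, s') # post) t + (s' t - s t) * tau_word (pre @ post) t) (at 0 within T)"
  using eventually_in_T
  by eventually_elim (simp only: shifted_word_change_shift[OF alg, of _ pre i a s post s'] tau_add tau_scale)

lemma has_expansion_step:
  assumes eq: "eventually (\<lambda>t. tau_word L t = tau_word L1 t + k t * tau_word L2 t) (at 0 within T)"
    and L1: "has_expansion L1" and L2: "has_expansion L2" and k: "k \<in> conv0 T"
    and ideal: "ideal_word L \<Longrightarrow> ideal_word L1 \<and> (ideal_word L2 \<or> k \<in> lin0 T)"
  shows "has_expansion L"
proof -
  have eq': "eventually (\<lambda>t. tau_word L1 t + k t * tau_word L2 t = tau_word L t) (at 0 within T)"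
    using eq by (simp add: eq_commute)
  have "tau_word L \<in> conv0 T"
    using L1 L2 k unfolding has_expansion_def
    by (intro conv0_cong[OF eq'] conv0_add conv0_mult) auto
  moreover have "tau_word L \<in> lin0 T" if "ideal_word L"
  proof -
    have "(\<lambda>t. k t * tau_word L2 t) \<in> lin0 T"
      using ideal[OF that] L2 k conv0_mult_lin0 lin0_mult_conv0 unfolding has_expansion_def by blast
    then show ?thesis
      using ideal[OF that] L1 unfolding has_expansion_def by (intro lin0_cong[OF eq'] lin0_add) auto
  qed
  ultimately show ?thesis
    by (simp add: has_expansion_def)
qed

definition tau_centered :: "'a shifted_letter list \<Rightarrow> 'a shifted_letter list" where
  "tau_centered L = map (\<lambda>(i, a, s). (i, a, \<lambda>t. tau t a)) L"

lemma tau_centered_simps [simp]: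
  "tau_centered [] = []"
  "tau_centered ((i, a, s) # L) = (i, a, \<lambda>t. tau t a) # tau_centered L"
  by (simp_all add: tau_centered_def)

lemma tau_centered_has_expansion:
  assumes "L \<noteq> []" and "valid_word L" and "alternating (map fst L)"
  shows "has_expansion (tau_centered L)"
proof -
  let ?xs = "map (\<lambda>(i, a, s). (i, a)) L"
  have "shifted_word sc t (tau_centered L) = centered_prod sc (tau t) ?xs" for t
    by (simp add: tau_centered_def shifted_word_def centered_prod_def comp_def split_def)
  moreover have "admissible A1 A2 ?xs"
    using assms(2,3) by (force simp: admissible_def valid_word_def comp_def split_def)
  ultimately have "tau_word (tau_centered L) \<in> small0 T"
    using free_centered_prod_small0[of ?xs] assms(1) by simp
  then show ?thesis
    unfolding has_expansion_def by (auto intro: small0_imp_lin0 lin0_imp_conv0)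
qed

lemma has_expansion_of_tau_centered_suffix:
  assumes shorter: "\<And>M. length M < length (pre @ L) \<Longrightarrow> valid_word M \<Longrightarrow> has_expansion M"
    and "valid_word (pre @ L)" and "has_expansion (pre @ tau_centered L)"
  shows "has_expansion (pre @ L)"
  using assms
proof (induction L arbitrary: pre)
  case (Cons x L)
  obtain i a s where x: "x = (i, a, s)"
    by (cases x)
  have a: "i \<in> {1, 2}" "a \<in> pick i A1 A2" "s \<in> conv0 T"
    using Cons.prems(2) by (simp_all add: x)
  then have tau_a: "(\<lambda>t. tau t a) \<in> conv0 T"
    using pick_subset_Un tau_letter_conv0 by blast
  have "has_expansion ((pre @ [(i, a, \<lambda>t. tau t a)]) @ L)"
  proof (rule Cons.IH)
    show "has_expansion M" if "length M < length ((pre @ [(i, a, \<lambda>t. tau t a)]) @ L)" "valid_word M" for M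
      using that by (intro Cons.prems(1)) simp_all
    show "valid_word ((pre @ [(i, a, \<lambda>t. tau t a)]) @ L)"
      using Cons.prems(2) tau_a a by (simp add: x)
    show "has_expansion ((pre @ [(i, a, \<lambda>t. tau t a)]) @ tau_centered L)"
      using Cons.prems(3) by (simp add: x)
  qed
  then have centered_a: "has_expansion (pre @ (i, a, \<lambda>t. tau t a) # L)"
    by simp
  have rest: "has_expansion (pre @ L)"
    using Cons.prems(2) by (intro Cons.prems(1)) (simp_all add: x)
  show ?case
    unfolding x
  proof (rule has_expansion_step[OF eventually_tau_word_change_shift centered_a rest])
    show "(\<lambda>t. tau t a - s t) \<in> conv0 T"
      using tau_a a(3) by (rule conv0_diff)
    have "(\<lambda>t. tau t a) \<in> lin0 T" if "a \<in> pick i I1 I2"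
      using that a(1) tau_ideal_letter_lin0 by (auto simp: pick_def)
    then show "ideal_word (pre @ (i, a, \<lambda>t. tau t a) # L) \<and>
        (ideal_word (pre @ L) \<or> (\<lambda>t. tau t a - s t) \<in> lin0 T)"
      if "ideal_word (pre @ (i, a, s) # L)"
      using that by (auto intro: lin0_diff)
  qed
qed simp

lemma has_expansion_merge:
  assumes shorter: "\<And>M. length M < length L \<Longrightarrow> valid_word M \<Longrightarrow> has_expansion M"
    and L: "L = pre @ (i, a, s) # (i, b, r) # post" and "valid_word L"
  shows "has_expansion L"
proof -
  have i: "i \<in> {1, 2}" "a \<in> pick i A1 A2" "b \<in> pick i A1 A2" "s \<in> conv0 T" "r \<in> conv0 T"
    and valid: "valid_word pre" "valid_word post"
    using \<open>valid_word L\<close> by (simp_all add: L)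
  define L1 where "L1 = pre @ (i, a, \<lambda>_. 0) # (i, b, r) # post"
  define N where "N = pre @ (i, a * b, \<lambda>_. 0) # post"
  define M where "M = pre @ (i, a, \<lambda>_. 0) # post"
  define L2 where "L2 = pre @ (i, b, r) # post"
  have N: "has_expansion N"
    by (rule shorter) (use i valid pick_mult in \<open>simp_all add: L N_def\<close>)
  have M: "has_expansion M"
    by (rule shorter) (use i valid in \<open>simp_all add: L M_def\<close>)
  have L2: "has_expansion L2"
    by (rule shorter) (use i valid in \<open>simp_all add: L L2_def\<close>)
  have "eventually (\<lambda>t. tau_word L1 t = tau_word N t + (- r t) * tau_word M t) (at 0 within T)"
    using eventually_tau_word_change_shift[of "pre @ [(i, a, \<lambda>_. 0)]" i b r post "\<lambda>_. 0"]
    by (simp add: L1_def N_def M_def shifted_word_merge_unshifted[OF alg, of _ pre i a i b post, simplified])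
  then have L1: "has_expansion L1"
  proof (rule has_expansion_step[OF _ N M])
    show "ideal_word N \<and> (ideal_word M \<or> (\<lambda>t. - r t) \<in> lin0 T)" if "ideal_word L1"
      using that i pick_ideal_mult[of i a b] by (auto simp: L1_def N_def M_def intro: lin0_minus)
  qed (use i in \<open>auto intro: conv0_minus\<close>)
  have "eventually (\<lambda>t. tau_word L t = tau_word L1 t + (- s t) * tau_word L2 t) (at 0 within T)"
    using eventually_tau_word_change_shift[of pre i a s "(i, b, r) # post" "\<lambda>_. 0"]
    by (simp add: L L1_def L2_def)
  then show ?thesis
  proof (rule has_expansion_step[OF _ L1 L2])
    show "ideal_word L1 \<and> (ideal_word L2 \<or> (\<lambda>t. - s t) \<in> lin0 T)" if "ideal_word L"
      using that by (auto simp: L L1_def L2_def intro: lin0_minus)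
  qed (use i in \<open>auto intro: conv0_minus\<close>)
qed

lemma valid_word_has_expansion: "valid_word L \<Longrightarrow> has_expansion L"
proof (induction "length L" arbitrary: L rule: less_induct)
  case less
  show ?case
  proof (cases "alternating (map fst L)")
    case alt: True
    show ?thesis
    proof (cases "L = []")
      case True
      have "tau_word L \<in> conv0 T"
        by (rule conv0_cong[OF _ conv0_const[of 1]])
          (use eventually_in_T in \<open>eventually_elim, simp add: True tau_one\<close>)
      then show ?thesis
        by (simp add: has_expansion_def True)
    next
      case False
      then show ?thesis
        using has_expansion_of_tau_centered_suffix[of "[]" L] less tau_centered_has_expansion alt
        by simp
    qed
  next
    case False
    then obtain pre x y post where "L = pre @ x # y # post" and "fst x = fst y"
      using not_distinct_adj_map_split[of fst L] by (auto simp: alternating_eq_distinct_adj)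
    then obtain i a s b r where L: "L = pre @ (i, a, s) # (i, b, r) # post"
      by (metis prod.exhaust_sel)
    show ?thesis
      using less.hyps L less.prems by (rule has_expansion_merge)
  qed
qed

lemma tau_word_perturbation:
  assumes "list_all2 (\<lambda>(i, a, s) (j, b, r). i = j \<and> a = b \<and> (\<lambda>t. r t - s t) \<in> small0 T) L L'"
    and "valid_word (pre @ L)" and "valid_word L'"
  shows "(\<lambda>t. tau_word (pre @ L) t - tau_word (pre @ L') t) \<in> small0 T"
  using assms
proof (induction L arbitrary: pre L')
  case (Cons x L)
  obtain i a s where x: "x = (i, a, s)"
    by (cases x)
  obtain r L1' where L': "L' = (i, a, r) # L1'" and r: "(\<lambda>t. r t - s t) \<in> small0 T"
    and rel: "list_all2 (\<lambda>(i, a, s) (j, b, r). i = j \<and> a = b \<and> (\<lambda>t. r t - s t) \<in> small0 T) L L1'"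
    using Cons.prems(1) by (auto simp: x list_all2_Cons1)
  have "(\<lambda>t. tau_word ((pre @ [(i, a, r)]) @ L) t - tau_word ((pre @ [(i, a, r)]) @ L1') t) \<in> small0 T"
    using Cons.prems(2,3) by (intro Cons.IH rel) (simp_all add: x L')
  moreover have "(\<lambda>t. (r t - s t) * tau_word (pre @ L) t) \<in> small0 T"
    using r valid_word_has_expansion[of "pre @ L"] Cons.prems(2)
    by (intro small0_mult_conv0) (simp_all add: x has_expansion_def)
  ultimately have "(\<lambda>t. (tau_word (pre @ (i, a, r) # L) t - tau_word (pre @ (i, a, r) # L1') t) +
      (r t - s t) * tau_word (pre @ L) t) \<in> small0 T"
    by (intro small0_add) simp_all
  then show ?case
    by (rule small0_cong[rotated])
      (use eventually_tau_word_change_shift[of pre i a s L r] in \<open>eventually_elim, simp add: x L'\<close>)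
qed simp

lemma tau_span_closed:
  assumes zero: "(\<lambda>_. 0) \<in> C"
    and add: "\<And>f g. f \<in> C \<Longrightarrow> g \<in> C \<Longrightarrow> (\<lambda>t. f t + g t) \<in> C"
    and scale: "\<And>f c. f \<in> C \<Longrightarrow> (\<lambda>t. c * f t) \<in> C"
    and cong: "\<And>f g. eventually (\<lambda>t. f t = g t) (at 0 within T) \<Longrightarrow> f \<in> C \<Longrightarrow> g \<in> C"
    and W: "\<And>w. w \<in> W \<Longrightarrow> (\<lambda>t. tau t w) \<in> C"
    and x: "x \<in> span W"
  shows "(\<lambda>t. tau t x) \<in> C"
  using x
proof (induction x rule: span_induct_alt)
  case base
  show ?case
    by (rule cong[OF _ zero]) (use eventually_in_T in \<open>eventually_elim, simp add: tau_zero\<close>)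
next
  case (step c w y)
  have "(\<lambda>t. c * tau t w + tau t y) \<in> C"
    using step W by (intro add scale) simp_all
  then show ?case
    by (rule cong[rotated]) (use eventually_in_T in \<open>eventually_elim, simp add: tau_add tau_scale\<close>)
qed

lemma valid_word_with_shifts:
  "valid_word (with_shifts f xs) \<longleftrightarrow> letters xs \<and> (\<forall>(i, a) \<in> set xs. f a \<in> conv0 T)"
  by (auto simp: valid_word_def with_shifts_def letters_def)

lemma ideal_word_with_shifts:
  "ideal_word (with_shifts f xs) \<longleftrightarrow> (\<exists>(i, a) \<in> set xs. a \<in> pick i I1 I2 \<and> f a \<in> lin0 T)"
  by (simp add: ideal_word_def with_shifts_def split_def)

lemma tau_conv0: "(\<lambda>t. tau t x) \<in> conv0 T"
proof (rule tau_span_closed)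
  show "(\<lambda>t. tau t w) \<in> conv0 T" if hw: "w \<in> words" for w
  proof -
    obtain xs where "letters xs" and w: "w = prod_list (map snd xs)"
      using hw unfolding words_def by blast
    then have "has_expansion (with_shifts (\<lambda>_ _. 0) xs)"
      by (intro valid_word_has_expansion) (simp add: valid_word_with_shifts)
    then show ?thesis
      by (simp add: has_expansion_def shifted_word_unshifted[OF alg] w)
  qed
  show "x \<in> span words"
    using span_words[OF gen] by simp
qed (auto intro: conv0_add conv0_mult conv0_cong)

lemma tau_lin0: "x \<in> ideal_hull sc (I1 \<union> I2) \<Longrightarrow> (\<lambda>t. tau t x) \<in> lin0 T"
proof (rule tau_span_closed)
  show "(\<lambda>t. tau t w) \<in> lin0 T" if hw: "w \<in> ideal_words" for w
  proof -
    obtain xs where xs: "letters xs" "\<exists>(i, a) \<in> set xs. a \<in> pick i I1 I2"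
      and w: "w = prod_list (map snd xs)"
      using hw unfolding ideal_words_def by blast
    then have "has_expansion (with_shifts (\<lambda>_ _. 0) xs)"
      by (intro valid_word_has_expansion) (simp add: valid_word_with_shifts)
    moreover have "ideal_word (with_shifts (\<lambda>_ _. 0) xs)"
      using xs(2) by (auto simp: ideal_word_with_shifts)
    ultimately show ?thesis
      by (simp add: has_expansion_def shifted_word_unshifted[OF alg] w)
  qed
qed (use ideal_hull_subset_span_ideal_words[OF gen] in \<open>auto intro: lin0_add conv0_mult_lin0 lin0_cong\<close>)

section \<open>The limit functionals\<close>

definition tau_limit :: "'a \<Rightarrow> complex" where
  "tau_limit x = Lim (at 0 within T) (\<lambda>t. tau t x)"

definition tau_derivative :: "'a \<Rightarrow> complex" where
  "tau_derivative x = Lim (at 0 within T) (\<lambda>t. tau t x / of_real t)"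

lemma tau_limit_eqI: "((\<lambda>t. tau t x) \<longlongrightarrow> c) (at 0 within T) \<Longrightarrow> tau_limit x = c"
  unfolding tau_limit_def using acc trivial_limit_within by (blast intro: tendsto_Lim)

lemma tau_derivative_eqI: "((\<lambda>t. tau t x / of_real t) \<longlongrightarrow> d) (at 0 within T) \<Longrightarrow> tau_derivative x = d"
  unfolding tau_derivative_def using acc trivial_limit_within by (blast intro: tendsto_Lim)

lemma tau_tendsto_limit: "((\<lambda>t. tau t x) \<longlongrightarrow> tau_limit x) (at 0 within T)"
  using tau_conv0[of x] tau_limit_eqI unfolding conv0_def by blast

lemma tau_slope_tendsto_derivative:
  "x \<in> ideal_hull sc (I1 \<union> I2) \<Longrightarrow> ((\<lambda>t. tau t x / of_real t) \<longlongrightarrow> tau_derivative x) (at 0 within T)"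
  using tau_lin0[of x] tau_derivative_eqI unfolding lin0_def conv0_def by blast

lemma tau_limit_linear: "linear_functional_on sc UNIV tau_limit"
  unfolding linear_functional_on_def
proof (intro conjI ballI allI)
  fix x y
  have lim: "((\<lambda>t. tau t x + tau t y) \<longlongrightarrow> tau_limit x + tau_limit y) (at 0 within T)"
    by (intro tendsto_add tau_tendsto_limit)
  show "tau_limit (x + y) = tau_limit x + tau_limit y"
    by (rule tau_limit_eqI, rule tendsto_within_cong[OF lim]) (simp add: tau_add)
next
  fix c x
  have lim: "((\<lambda>t. c * tau t x) \<longlongrightarrow> c * tau_limit x) (at 0 within T)"
    by (intro tendsto_mult_left tau_tendsto_limit)
  show "tau_limit (sc c x) = c * tau_limit x"
    by (rule tau_limit_eqI, rule tendsto_within_cong[OF lim]) (simp add: tau_scale)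
qed

lemma tau_derivative_linear: "linear_functional_on sc (ideal_hull sc (I1 \<union> I2)) tau_derivative"
  unfolding linear_functional_on_def
proof (intro conjI ballI allI)
  fix x y
  assume "x \<in> ideal_hull sc (I1 \<union> I2)" "y \<in> ideal_hull sc (I1 \<union> I2)"
  then have lim: "((\<lambda>t. tau t x / of_real t + tau t y / of_real t) \<longlongrightarrow>
      tau_derivative x + tau_derivative y) (at 0 within T)"
    by (intro tendsto_add tau_slope_tendsto_derivative)
  show "tau_derivative (x + y) = tau_derivative x + tau_derivative y"
    by (rule tau_derivative_eqI, rule tendsto_within_cong[OF lim]) (simp add: tau_add add_divide_distrib)
next
  fix c x
  assume "x \<in> ideal_hull sc (I1 \<union> I2)"
  then have lim: "((\<lambda>t. c * (tau t x / of_real t)) \<longlongrightarrow> c * tau_derivative x) (at 0 within T)"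
    by (intro tendsto_mult_left tau_slope_tendsto_derivative)
  show "tau_derivative (sc c x) = c * tau_derivative x"
    by (rule tau_derivative_eqI, rule tendsto_within_cong[OF lim]) (simp add: tau_scale)
qed

lemma tau_limit_one: "tau_limit 1 = 1"
  by (rule tau_limit_eqI, rule tendsto_within_cong[OF tendsto_const]) (simp add: tau_one)

lemma tau_limit_letter: "a \<in> A1 \<union> A2 \<Longrightarrow> tau_limit a = tau0 a"
  by (intro tau_limit_eqI small0_diff_imp_tendsto tau_letter_small0)

lemma tau_derivative_letter: "a \<in> I1 \<union> I2 \<Longrightarrow> tau_derivative a = tau' a"
  by (intro tau_derivative_eqI tau_ideal_letter_slope)

lemma tau_limit_deviation_smallo: "(\<lambda>t. tau t x - tau_limit x) \<in> o[at 0 within T](\<lambda>_. 1)"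
  by (rule smalloI_tendsto) (use tau_tendsto_limit[of x] in \<open>simp_all add: Lim_null[symmetric]\<close>)

lemma tau_derivative_deviation_smallo:
  "x \<in> ideal_hull sc (I1 \<union> I2) \<Longrightarrow>
    (\<lambda>t. tau t x - complex_of_real t * tau_derivative x) \<in> o[at 0 within T](\<lambda>t. complex_of_real t)"
  using tau_slope_tendsto_derivative[of x] by (simp add: slope_tendsto_iff_small0 small0_iff_smallo)

lemma free_wrt_tau_limit: "free_wrt sc tau_limit A1 A2"
  unfolding free_wrt_def
proof (intro allI impI, elim conjE)
  fix xs :: "(nat \<times> 'a) list"
  assume ne: "xs \<noteq> []" and adm: "admissible A1 A2 xs"
  then have letters: "letters xs"
    by (simp add: admissible_iff_letters)
  then have in_Un: "\<And>i a. (i, a) \<in> set xs \<Longrightarrow> a \<in> A1 \<union> A2"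
    by (rule letters_in_Un)
  let ?L = "with_shifts (\<lambda>a _. tau_limit a) xs" and ?Lc = "with_shifts (\<lambda>a t. tau t a) xs"
  have "(\<lambda>t. tau_word ([] @ ?L) t - tau_word ([] @ ?Lc) t) \<in> small0 T"
  proof (rule tau_word_perturbation)
    show "list_all2 (\<lambda>(i, a, s) (j, b, r). i = j \<and> a = b \<and> (\<lambda>t. r t - s t) \<in> small0 T) ?L ?Lc"
      using in_Un by (intro list_all2_with_shifts) (simp add: tau_limit_letter tau_letter_small0)
  qed (use letters in_Un tau_letter_conv0 in \<open>auto simp: valid_word_with_shifts\<close>)
  moreover have "tau_word ?Lc \<in> small0 T"
    using free_centered_prod_small0[OF ne adm] by (simp add: shifted_word_with_shifts)
  ultimately have "(\<lambda>t. (tau_word ?L t - tau_word ?Lc t) + tau_word ?Lc t) \<in> small0 T"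
    by (intro small0_add) simp_all
  then have "((\<lambda>t. tau t (centered_prod sc tau_limit xs)) \<longlongrightarrow> 0) (at 0 within T)"
    by (auto dest: small0_imp_tendsto_zero simp: shifted_word_with_shifts)
  then show "tau_limit (centered_prod sc tau_limit xs) = 0"
    by (rule tau_limit_eqI)
qed

lemma tau_mirror_word_small0:
  assumes h: "h \<in> {1, 2}" "v \<in> pick h I1 I2"
    and as: "letters as" "\<forall>(i, a) \<in> set as. tau_limit a = 0"
    and bs: "letters bs" "\<forall>(j, b) \<in> set bs. tau_limit b = 0"
    and alt: "alternating (rev (map fst as) @ [h] @ map fst bs)"
  shows "tau_word (with_shifts (\<lambda>_ _. 0) (rev as) @ (h, v, \<lambda>t. tau t v) # with_shifts (\<lambda>_ _. 0) bs)
    \<in> small0 T"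
proof -
  txt \<open>Since \<tau>(a) = 0 for the letters of as and bs, shifting them by 0 instead of \<tau>_t(a)
    costs only o(t), and the fully \<tau>_t-centred word is o(t) by freeness.\<close>
  define zero :: "'a \<Rightarrow> real \<Rightarrow> complex" where "zero = (\<lambda>_ _. 0)"
  define centering :: "'a \<Rightarrow> real \<Rightarrow> complex" where "centering = (\<lambda>a t. tau t a)"
  define xs where "xs = rev as @ (h, v) # bs"
  have v: "v \<in> pick h A1 A2"
    using h pick_ideal_subset by blast
  have adm: "admissible A1 A2 xs"
    using as(1) bs(1) h(1) v alt by (simp add: admissible_iff_letters xs_def rev_map)
  have centered: "(\<lambda>t. centering a t - zero a t) \<in> small0 T"
    if "letters ys" "\<forall>(i, a) \<in> set ys. tau_limit a = 0" "(i, a) \<in> set ys" for ys i a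
  proof -
    have "a \<in> A1 \<union> A2"
      using that(1,3) by (rule letters_in_Un)
    with that(2,3) show ?thesis
      using tau_letter_small0[of a] tau_limit_letter[of a] by (auto simp: centering_def zero_def)
  qed
  let ?L = "with_shifts zero (rev as) @ (h, v, centering v) # with_shifts zero bs"
  let ?Lc = "with_shifts centering xs"
  have "(\<lambda>t. tau_word ([] @ ?L) t - tau_word ([] @ ?Lc) t) \<in> small0 T"
  proof (rule tau_word_perturbation)
    show "list_all2 (\<lambda>(i, a, s) (j, b, r). i = j \<and> a = b \<and> (\<lambda>t. r t - s t) \<in> small0 T) ?L ?Lc"
      unfolding xs_def with_shifts_simps
      using centered[OF as] centered[OF bs]
      by (intro list_all2_appendI list_all2_Cons[THEN iffD2] conjI) (auto intro!: list_all2_with_shifts)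
    have "v \<in> A1 \<union> A2"
      using v h(1) pick_subset_Un by blast
    then show "valid_word ([] @ ?L)" "valid_word ?Lc"
      using as(1) bs(1) adm h(1) v tau_letter_conv0 letters_in_Un[of xs]
      by (auto simp: valid_word_with_shifts zero_def centering_def admissible_iff_letters)
  qed
  moreover have "tau_word ?Lc \<in> small0 T"
    using free_centered_prod_small0[OF _ adm] unfolding centering_def shifted_word_with_shifts
    by (simp add: xs_def)
  ultimately have "(\<lambda>t. (tau_word ?L t - tau_word ?Lc t) + tau_word ?Lc t) \<in> small0 T"
    by (intro small0_add) simp_all
  then show ?thesis
    by (simp add: zero_def centering_def)
qed

lemma tau_derivative_mirror:
  assumes h: "h \<in> {1, 2}" "v \<in> pick h I1 I2"
    and "letters as" "\<forall>(i, a) \<in> set as. tau_limit a = 0"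
    and "letters bs" "\<forall>(j, b) \<in> set bs. tau_limit b = 0"
    and "alternating (rev (map fst as) @ [h] @ map fst bs)"
  shows "tau_derivative (prod_list (rev (map snd as)) * v * prod_list (map snd bs)) =
    tau_limit (prod_list (rev (map snd as)) * prod_list (map snd bs)) * tau_derivative v"
proof -
  define P B where "P = prod_list (rev (map snd as))" and "B = prod_list (map snd bs)"
  let ?L = "with_shifts (\<lambda>_ _. 0) (rev as) @ (h, v, \<lambda>t. tau t v) # with_shifts (\<lambda>_ _. 0) bs"
  have v: "v \<in> I1 \<union> I2"
    using h by (auto simp: pick_def split: if_splits)
  have "((\<lambda>t. tau_word ?L t / of_real t) \<longlongrightarrow> 0) (at 0 within T)"
    using tau_mirror_word_small0[OF assms] by (simp add: small0_def)
  then have "((\<lambda>t. tau_word ?L t / of_real t + tau t v / of_real t * tau t (P * B)) \<longlongrightarrow>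
      0 + tau_derivative v * tau_limit (P * B)) (at 0 within T)"
    using tau_ideal_letter_slope[OF v] tau_derivative_letter[OF v]
    by (intro tendsto_add tendsto_mult tau_tendsto_limit) simp_all
  moreover have "eventually (\<lambda>t. tau_word ?L t / of_real t + tau t v / of_real t * tau t (P * B) =
      tau t (P * v * B) / of_real t) (at 0 within T)"
    using eventually_tau_word_change_shift[of "with_shifts (\<lambda>_ _. 0) (rev as)" h v "\<lambda>_. 0"
        "with_shifts (\<lambda>_ _. 0) bs" "\<lambda>t. tau t v"]
    by eventually_elim
      (simp add: P_def B_def shifted_word_unshifted[OF alg] rev_map add_divide_distrib mult.assoc)
  ultimately show ?thesis
    unfolding P_def B_def by (intro tau_derivative_eqI) (simp add: tendsto_cong mult.commute)
qed

lemma free_type_B_tau_limit: "free_type_B sc tau_limit tau_derivative A1 I1 A2 I2"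
  unfolding free_type_B_def
proof (intro conjI allI impI)
  show "free_wrt sc tau_limit A1 A2"
    by (rule free_wrt_tau_limit)
  fix as bs :: "(nat \<times> 'a) list" and h v
  assume "h \<in> {1, 2} \<and> v \<in> pick h I1 I2 \<and>
    (\<forall>(i, a) \<in> set as. i \<in> {1, 2} \<and> a \<in> pick i A1 A2 \<and> tau_limit a = 0) \<and>
    (\<forall>(j, b) \<in> set bs. j \<in> {1, 2} \<and> b \<in> pick j A1 A2 \<and> tau_limit b = 0) \<and>
    alternating (rev (map fst as) @ [h] @ map fst bs)"
  then have "h \<in> {1, 2}" "v \<in> pick h I1 I2"
    and "letters as" "\<forall>(i, a) \<in> set as. tau_limit a = 0"
    and "letters bs" "\<forall>(j, b) \<in> set bs. tau_limit b = 0"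
    and "alternating (rev (map fst as) @ [h] @ map fst bs)"
    by (auto simp: letters_def)
  then show "tau_derivative (prod_list (rev (map snd as)) * v * prod_list (map snd bs)) =
      (if map fst as = map fst bs
       then (\<Prod>(a, b) \<leftarrow> zip (map snd as) (map snd bs). tau_limit (a * b)) * tau_derivative v
       else 0)"
    by (simp add: tau_derivative_mirror
        free_wrt_mirror_moment[OF tau_limit_linear tau_limit_one free_wrt_tau_limit])
qed

end

theorem proposition2p9:
  fixes sc :: "complex \<Rightarrow> 'a::ring_1 \<Rightarrow> 'a"
    and A1 A2 I1 I2 :: "'a set"
    and T :: "real set"
    and tau :: "real \<Rightarrow> 'a \<Rightarrow> complex"
    and tau0 :: "'a \<Rightarrow> complex"
    and tau' :: "'a \<Rightarrow> complex"
  assumes alg: "complex_algebra sc"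
    and sub1: "unital_subalgebra sc A1"
    and sub2: "unital_subalgebra sc A2"
    and gen: "subalgebra_hull sc (A1 \<union> A2) = UNIV"
    and acc: "0 islimpt T"
    and lin: "\<forall>t\<in>T. linear_functional_on sc UNIV (tau t) \<and> tau t 1 = 1"
    and id1: "ideal_of sc A1 I1"
    and id2: "ideal_of sc A2 I2"
    and free: "free_up_to_o_t sc T tau A1 A2"
    and lim0: "\<forall>a \<in> A1 \<union> A2.
                 (\<lambda>t. tau t a - tau0 a) \<in> o[at 0 within T](\<lambda>t. complex_of_real t)"
    and lim1: "\<forall>a \<in> I1 \<union> I2.
                 (\<lambda>t. tau t a - complex_of_real t * tau' a) \<in> o[at 0 within T](\<lambda>t. complex_of_real t)"
  shows "\<exists>phi phi'.
           linear_functional_on sc UNIV phi \<and> (\<forall>a \<in> A1 \<union> A2. phi a = tau0 a) \<and>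
           linear_functional_on sc (ideal_hull sc (I1 \<union> I2)) phi' \<and>
           (\<forall>a \<in> I1 \<union> I2. phi' a = tau' a) \<and>
           (\<forall>a. (\<lambda>t. tau t a - phi a) \<in> o[at 0 within T](\<lambda>t. 1)) \<and>
           (\<forall>a \<in> ideal_hull sc (I1 \<union> I2).
              (\<lambda>t. tau t a - complex_of_real t * phi' a) \<in> o[at 0 within T](\<lambda>t. complex_of_real t)) \<and>
           free_type_B sc phi phi' A1 I1 A2 I2"
proof -
  interpret infinitesimally_free sc A1 A2 I1 I2 T tau tau0 tau'
    using assms by (simp add: infinitesimally_free_def infinitesimally_free_axioms_def
        two_ideals_def two_ideals_axioms_def two_subalgebras_def)
  show ?thesis
    using tau_limit_linear tau_limit_letter tau_derivative_linear tau_derivative_letter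
      tau_limit_deviation_smallo tau_derivative_deviation_smallo free_type_B_tau_limit
    by blast
qed

end
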